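(* If $r\ge\sqrt{\frac{c\ln n}{n}}$ with a constant $c\ge 36$, then w.h.p. $G(n,r)$ is not plane.
   Context: The random geometric graph $G(n,r)$ is formed by choosing $n$ points independently and uniformly at random in the unit square $[0,1]^2$; two points are joined by a straight-line edge iff their Euclidean distance is at most $r$, where $r=r(n)$ is a function of $n$. Two line segments cross if they have a common point that is interior to both. A geometric graph is plane if no two of its edges cross. "W.h.p." means with probability tending to $1$ as $n\to\infty$. *)

theory Defs
  imports "HOL-Probability.Probability"
begin

type_synonym point = "real \<times> real"

definition unit_square :: "point set" where
  "unit_square = cbox (0,0) (1,1)"

definition unif_square :: "point measure" where
  "unif_square = uniform_measure lborel unit_square"

definition rgg_space :: "nat \<Rightarrow> (nat \<Rightarrow> point) measure" where
  "rgg_space n = (\<Pi>\<^sub>M i\<in>{..<n}. unif_square)"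

definition segments_cross :: "point \<Rightarrow> point \<Rightarrow> point \<Rightarrow> point \<Rightarrow> bool" where
  "segments_cross a b c d \<longleftrightarrow> open_segment a b \<inter> open_segment c d \<noteq> {}"

definition rgg_plane :: "nat \<Rightarrow> real \<Rightarrow> (nat \<Rightarrow> point) \<Rightarrow> bool" where
  "rgg_plane n r x \<longleftrightarrow>
     (\<forall>i<n. \<forall>j<n. \<forall>k<n. \<forall>l<n.
        i \<noteq> j \<and> k \<noteq> l \<and> {i, j} \<noteq> {k, l} \<and>
        dist (x i) (x j) \<le> r \<and> dist (x k) (x l) \<le> r
        \<longrightarrow> \<not> segments_cross (x i) (x j) (x k) (x l))"

end

theory Submission
  imports Defs "HOL-Real_Asymp.Real_Asymp"
begin

text \<open>Four small squares of side \<open>h/5\<close> placed left, right, below and above the centre of the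
  unit square at distance \<open>h\<close> from it force a crossing: any points in the left and right squares
  span a nearly horizontal edge, any points in the lower and upper squares a nearly vertical one,
  both of length at most \<open>3h \<le> r\<close>, and these two edges cross. Each square is empty with
  probability \<open>(1 - h\<^sup>2/25)\<^sup>n \<le> exp (- n h\<^sup>2/25)\<close>, and with \<open>h = min r 1 / 3\<close> and
  \<open>n r\<^sup>2 \<ge> ln n\<close> this is at most \<open>n powr (-1/225)\<close>.\<close>

lemma emeasure_lborel_unit_square: "emeasure lborel unit_square = 1"
  unfolding unit_square_def by (simp add: emeasure_lborel_cbox_eq Basis_prod_def)

lemma prob_space_unif_square: "prob_space unif_square"
  unfolding unif_square_def
  by (rule prob_space_uniform_measure) (simp_all add: emeasure_lborel_unit_square)

lemma sets_unif_square [simp]: "sets unif_square = sets borel"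
  unfolding unif_square_def by simp

lemma space_unif_square [simp]: "space unif_square = UNIV"
  unfolding unif_square_def by simp

lemma prob_space_rgg_space: "prob_space (rgg_space n)"
  unfolding rgg_space_def by (intro prob_space_PiM prob_space_unif_square)

lemma measure_unif_square_compl_rectangle:
  assumes "a1 \<le> b1" "a2 \<le> b2" "cbox (a1, a2) (b1, b2) \<subseteq> unit_square"
  shows "measure unif_square (- cbox (a1, a2) (b1, b2)) = 1 - (b1 - a1) * (b2 - a2)"
proof -
  interpret prob_space unif_square by (rule prob_space_unif_square)
  have "measure unif_square (cbox (a1, a2) (b1, b2)) = (b1 - a1) * (b2 - a2)"
    using assms emeasure_lborel_unit_square
    by (simp add: unif_square_def measure_def Int_absorb1 emeasure_lborel_cbox_eq
        Basis_prod_def unit_square_def divide_ennreal_def)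
  then show ?thesis
    using prob_compl[of "cbox (a1, a2) (b1, b2)"] by (simp add: Compl_eq_Diff_UNIV)
qed

lemma rgg_all_outside_eq_PiE:
  "{x \<in> space (rgg_space n). \<forall>i<n. x i \<notin> S} = (\<Pi>\<^sub>E i\<in>{..<n}. - S)"
  unfolding rgg_space_def space_PiM by (auto simp: PiE_iff extensional_def)

lemma sets_rgg_all_outside:
  "S \<in> sets borel \<Longrightarrow> {x \<in> space (rgg_space n). \<forall>i<n. x i \<notin> S} \<in> sets (rgg_space n)"
  unfolding rgg_all_outside_eq_PiE unfolding rgg_space_def
  by (intro sets_PiM_I_finite) (auto simp: sets.compl_sets)

lemma measure_rgg_all_outside:
  assumes "S \<in> sets borel"
  shows "measure (rgg_space n) {x \<in> space (rgg_space n). \<forall>i<n. x i \<notin> S}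
           = measure unif_square (- S) ^ n"
proof -
  interpret U: prob_space unif_square by (rule prob_space_unif_square)
  interpret P: product_prob_space "\<lambda>_. unif_square" "{..<n}"
    by unfold_locales
  have "emeasure (rgg_space n) (\<Pi>\<^sub>E i\<in>{..<n}. - S) = ennreal (measure unif_square (- S) ^ n)"
    using assms unfolding rgg_space_def
    by (subst P.emeasure_PiM) (auto simp: sets.compl_sets U.emeasure_eq_measure ennreal_power)
  then show ?thesis
    by (simp add: rgg_all_outside_eq_PiE measure_def)
qed

lemma segments_cross_iff:
  "segments_cross a b c d \<longleftrightarrow> a \<noteq> b \<and> c \<noteq> d \<and>
     (\<exists>t s. 0 < t \<and> t < 1 \<and> 0 < s \<and> s < 1 \<and> (1 - t) *\<^sub>R a + t *\<^sub>R b = (1 - s) *\<^sub>R c + s *\<^sub>R d)"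
proof -
  have "segments_cross a b c d \<longleftrightarrow> (\<exists>z. z \<in> open_segment a b \<and> z \<in> open_segment c d)"
    unfolding segments_cross_def by blast
  then show ?thesis unfolding in_segment(2) by blast
qed

text \<open>The crossing relation is the projection of an increasing union of these compact sets, so it
  is \<open>\<sigma>\<close>-compact and hence Borel.\<close>
definition crossing_witnesses :: "nat \<Rightarrow> ((point \<times> point \<times> point \<times> point) \<times> real \<times> real) set" where
  "crossing_witnesses m = {((a, b, c, d), t, s).
     norm (a, b, c, d) \<le> real m \<and> 1 / real (Suc m) \<le> dist a b \<and> 1 / real (Suc m) \<le> dist c d \<and>
     1 / real (Suc m) \<le> t \<and> t \<le> 1 - 1 / real (Suc m) \<and> 1 / real (Suc m) \<le> s \<and> s \<le> 1 - 1 / real (Suc m) \<and>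
     (1 - t) *\<^sub>R a + t *\<^sub>R b = (1 - s) *\<^sub>R c + s *\<^sub>R d}"

lemma compact_crossing_witnesses: "compact (crossing_witnesses m)"
proof (unfold compact_eq_bounded_closed, intro conjI)
  have "crossing_witnesses m \<subseteq> cball 0 (real m) \<times> cbox (0, 0) (1, 1)"
  proof
    fix z assume "z \<in> crossing_witnesses m"
    then obtain a b c d t s where z: "z = ((a, b, c, d), t, s)"
      and "((a, b, c, d), t, s) \<in> crossing_witnesses m"
      by (metis prod.exhaust)
    then have "norm (a, b, c, d) \<le> real m" "1 / real (Suc m) \<le> t" "t \<le> 1 - 1 / real (Suc m)"
      "1 / real (Suc m) \<le> s" "s \<le> 1 - 1 / real (Suc m)"
      unfolding crossing_witnesses_def by simp_all
    moreover have "0 \<le> 1 / real (Suc m)" by simp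
    ultimately have "norm (a, b, c, d) \<le> real m \<and> 0 \<le> t \<and> t \<le> 1 \<and> 0 \<le> s \<and> s \<le> 1"
      by linarith
    then show "z \<in> cball 0 (real m) \<times> cbox (0, 0) (1, 1)"
      by (simp add: z cbox_Pair_eq)
  qed
  then show "bounded (crossing_witnesses m)"
    using bounded_Times[OF bounded_cball bounded_cbox] by (rule bounded_subset[rotated])
  show "closed (crossing_witnesses m)"
    unfolding crossing_witnesses_def case_prod_unfold
    by (intro closed_Collect_conj closed_Collect_le closed_Collect_eq continuous_intros)
qed

lemma segments_cross_eq_UN_crossing_witnesses:
  "{(a, b, c, d). segments_cross a b c d} = (\<Union>m. fst ` crossing_witnesses m)"
proof (intro equalityI subsetI)
  fix p :: "point \<times> point \<times> point \<times> point"
  assume "p \<in> {(a, b, c, d). segments_cross a b c d}"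
  then obtain a b c d where p: "p = (a, b, c, d)" and "segments_cross a b c d"
    by blast
  then obtain t s where ne: "a \<noteq> b" "c \<noteq> d" and ts: "0 < t" "t < 1" "0 < s" "s < 1"
    and eq: "(1 - t) *\<^sub>R a + t *\<^sub>R b = (1 - s) *\<^sub>R c + s *\<^sub>R d"
    unfolding segments_cross_iff by blast
  define e where "e = Min {dist a b, dist c d, t, 1 - t, s, 1 - s}"
  have "0 < e" unfolding e_def using ne ts by simp
  then obtain m1 :: nat where m1: "1 / real (Suc m1) < e" using nat_approx_posE by blast
  obtain m2 :: nat where m2: "norm (a, b, c, d) \<le> real m2" using real_arch_simple by blast
  define m where "m = max m1 m2"
  have "1 / real (Suc m) \<le> 1 / real (Suc m1)"
    unfolding m_def by (intro divide_left_mono) auto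
  with m1 have "1 / real (Suc m) \<le> e" by linarith
  moreover have "norm (a, b, c, d) \<le> real m" using m2 unfolding m_def by linarith
  ultimately have "((a, b, c, d), t, s) \<in> crossing_witnesses m"
    unfolding crossing_witnesses_def e_def using eq by auto
  then show "p \<in> (\<Union>m. fst ` crossing_witnesses m)" unfolding p by force
next
  fix p assume "p \<in> (\<Union>m. fst ` crossing_witnesses m)"
  then obtain m a b c d t s where p: "p = (a, b, c, d)"
    and w: "((a, b, c, d), t, s) \<in> crossing_witnesses m"
    by force
  then have "1 / real (Suc m) \<le> dist a b" "1 / real (Suc m) \<le> dist c d"
    "1 / real (Suc m) \<le> t" "t \<le> 1 - 1 / real (Suc m)" "1 / real (Suc m) \<le> s" "s \<le> 1 - 1 / real (Suc m)"
    and eq: "(1 - t) *\<^sub>R a + t *\<^sub>R b = (1 - s) *\<^sub>R c + s *\<^sub>R d"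
    unfolding crossing_witnesses_def by simp_all
  moreover have "0 < 1 / real (Suc m)" by simp
  ultimately have "0 < dist a b" "0 < dist c d" "0 < t" "t < 1" "0 < s" "s < 1"
    by linarith+
  with eq have "segments_cross a b c d"
    unfolding segments_cross_iff by auto
  then show "p \<in> {(a, b, c, d). segments_cross a b c d}" by (simp add: p)
qed

lemma sets_segments_cross: "{(a, b, c, d). segments_cross a b c d} \<in> sets borel"
proof -
  have "closed (fst ` crossing_witnesses m)" for m
    by (intro compact_imp_closed compact_continuous_image continuous_intros compact_crossing_witnesses)
  then show ?thesis
    unfolding segments_cross_eq_UN_crossing_witnesses by (intro sets.countable_UN) auto
qed

lemma measurable_segments_cross [measurable (raw)]:
  assumes [measurable]: "f \<in> borel_measurable M" "g \<in> borel_measurable M"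
    "h \<in> borel_measurable M" "k \<in> borel_measurable M"
  shows "Measurable.pred M (\<lambda>x. segments_cross (f x) (g x) (h x) (k x))"
proof -
  have tuple: "(\<lambda>x. (f x, g x, h x, k x)) \<in> borel_measurable M" by measurable
  have "Measurable.pred borel (\<lambda>(a, b, c, d). segments_cross a b c d)"
    using sets_segments_cross by (simp add: pred_def vimage_def Collect_conj_eq)
  from measurable_compose[OF tuple this] show ?thesis by simp
qed

lemma measurable_rgg_component [measurable]:
  assumes "i < n"
  shows "(\<lambda>x. x i) \<in> borel_measurable (rgg_space n)"
proof -
  have "(\<lambda>x. x i) \<in> rgg_space n \<rightarrow>\<^sub>M unif_square"
    unfolding rgg_space_def using assms by (intro measurable_component_singleton) auto
  then show ?thesis using measurable_cong_sets[OF refl sets_unif_square, of "rgg_space n"] by simp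
qed

lemma sets_rgg_nonplane: "{x \<in> space (rgg_space n). \<not> rgg_plane n r x} \<in> sets (rgg_space n)"
proof -
  have "{x \<in> space (rgg_space n). \<not> rgg_plane n r x} =
    (\<Union>i<n. \<Union>j<n. \<Union>k<n. \<Union>l<n. {x \<in> space (rgg_space n). i \<noteq> j \<and> k \<noteq> l \<and> {i, j} \<noteq> {k, l} \<and>
        dist (x i) (x j) \<le> r \<and> dist (x k) (x l) \<le> r \<and> segments_cross (x i) (x j) (x k) (x l)})"
    unfolding rgg_plane_def by blast
  also have "\<dots> \<in> sets (rgg_space n)"
    by (intro sets.finite_UN finite_lessThan ballI) (simp_all, measurable)
  finally show ?thesis .
qed

definition square_around :: "point \<Rightarrow> real \<Rightarrow> point set" where
  "square_around p e = cbox (fst p - e, snd p - e) (fst p + e, snd p + e)"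

lemma mem_square_around:
  "q \<in> square_around p e \<longleftrightarrow> \<bar>fst q - fst p\<bar> \<le> e \<and> \<bar>snd q - snd p\<bar> \<le> e"
  by (cases q) (auto simp: square_around_def abs_le_iff)

lemma dist_le_abs_fst_plus_abs_snd:
  fixes p q :: point
  shows "dist p q \<le> \<bar>fst p - fst q\<bar> + \<bar>snd p - snd q\<bar>"
  by (cases p, cases q) (simp add: dist_Pair_Pair dist_real_def sqrt_sum_squares_le_sum_abs)

lemma diff_mult_pos_of_bounds:
  fixes X Y x y h :: real
  assumes "0 < h" "4/5 * h \<le> X" "4/5 * h \<le> Y" "\<bar>x\<bar> \<le> 6/5 * h" "\<bar>y\<bar> \<le> 1/5 * h"
  shows "0 < X * Y - x * y"
proof -
  have "(4/5 * h) * (4/5 * h) \<le> X * Y" using assms by (intro mult_mono) auto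
  moreover have "\<bar>x * y\<bar> \<le> (6/5 * h) * (1/5 * h)"
    unfolding abs_mult using assms by (intro mult_mono) auto
  moreover have "(6/5 * h) * (1/5 * h) < (4/5 * h) * (4/5 * h)" using assms by simp
  ultimately show ?thesis by (smt (verit) abs_ge_self)
qed

text \<open>By Cramer's rule the crossing parameters are \<open>T / D\<close> and \<open>S / D\<close>; each of \<open>D\<close>, \<open>T\<close>,
  \<open>S\<close>, \<open>D - T\<close>, \<open>D - S\<close> is a determinant with the dominant diagonal of
  \<open>diff_mult_pos_of_bounds\<close>.\<close>
lemma segments_cross_plus_shape:
  fixes h :: real and z a b c d :: point
  assumes h: "0 < h"
    and "a \<in> square_around (fst z - h, snd z) (h/10)" "b \<in> square_around (fst z + h, snd z) (h/10)"
    and "c \<in> square_around (fst z, snd z - h) (h/10)" "d \<in> square_around (fst z, snd z + h) (h/10)"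
  shows "segments_cross a b c d"
proof -
  obtain a1 a2 b1 b2 c1 c2 d1 d2 where pts: "a = (a1, a2)" "b = (b1, b2)" "c = (c1, c2)" "d = (d1, d2)"
    by (metis prod.exhaust)
  note bounds = assms(2-5)[unfolded pts mem_square_around abs_le_iff fst_conv snd_conv]
  define D where "D = (b1 - a1) * (d2 - c2) - (b2 - a2) * (d1 - c1)"
  define T where "T = (c1 - a1) * (d2 - c2) - (c2 - a2) * (d1 - c1)"
  define S where "S = (b1 - a1) * (a2 - c2) - (c1 - a1) * (a2 - b2)"
  have "0 < D" "0 < T" "0 < S"
    unfolding D_def T_def S_def using bounds by (intro diff_mult_pos_of_bounds[OF h]; linarith)+
  moreover have "0 < D - T"
  proof -
    have "D - T = (b1 - c1) * (d2 - c2) - (b2 - c2) * (d1 - c1)"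
      unfolding D_def T_def by (simp add: algebra_simps)
    also have "0 < \<dots>" using bounds by (intro diff_mult_pos_of_bounds[OF h]; linarith)
    finally show ?thesis .
  qed
  moreover have "0 < D - S"
  proof -
    have "D - S = (b1 - a1) * (d2 - a2) - (d1 - a1) * (b2 - a2)"
      unfolding D_def S_def by (simp add: algebra_simps)
    also have "0 < \<dots>" using bounds by (intro diff_mult_pos_of_bounds[OF h]; linarith)
    finally show ?thesis .
  qed
  ultimately have ts: "0 < T / D" "T / D < 1" "0 < S / D" "S / D < 1"
    by (simp_all add: field_simps)
  have "(1 - T / D) * a1 + T / D * b1 = (1 - S / D) * c1 + S / D * d1"
    "(1 - T / D) * a2 + T / D * b2 = (1 - S / D) * c2 + S / D * d2"
    using \<open>0 < D\<close> unfolding D_def T_def S_def by (simp_all add: field_simps)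
  then have "(1 - T / D) *\<^sub>R a + (T / D) *\<^sub>R b = (1 - S / D) *\<^sub>R c + (S / D) *\<^sub>R d"
    unfolding pts by simp
  moreover have "a \<noteq> b" "c \<noteq> d" using bounds h unfolding pts by auto
  ultimately show ?thesis
    unfolding segments_cross_iff using ts by blast
qed

lemma square_around_subset_unit_square:
  assumes "e \<le> fst p" "fst p + e \<le> 1" "e \<le> snd p" "snd p + e \<le> 1"
  shows "square_around p e \<subseteq> unit_square"
  using assms by (auto simp: square_around_def unit_square_def cbox_Pair_eq)

lemma measure_unif_square_compl_square_around:
  assumes "0 \<le> e" "square_around p e \<subseteq> unit_square"
  shows "measure unif_square (- square_around p e) = 1 - (2 * e)\<^sup>2"
  using assms unfolding square_around_def
  by (subst measure_unif_square_compl_rectangle) (simp_all add: power2_eq_square)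

lemma not_rgg_plane_if_plus_shape:
  fixes h r :: real and z :: point
  assumes h: "0 < h" "3 * h \<le> r" and idx: "i < n" "j < n" "k < n" "l < n"
    and sq: "x i \<in> square_around (fst z - h, snd z) (h/10)" "x j \<in> square_around (fst z + h, snd z) (h/10)"
      "x k \<in> square_around (fst z, snd z - h) (h/10)" "x l \<in> square_around (fst z, snd z + h) (h/10)"
  shows "\<not> rgg_plane n r x"
proof
  assume plane: "rgg_plane n r x"
  note bounds = sq[unfolded mem_square_around abs_le_iff fst_conv snd_conv]
  have "fst (x i) < fst (x k)" "fst (x k) < fst (x j)" "snd (x k) < snd (x l)"
    using bounds h by linarith+
  then have "i \<noteq> j" "k \<noteq> l" "k \<notin> {i, j}" by auto
  then have distinct: "i \<noteq> j" "k \<noteq> l" "{i, j} \<noteq> {k, l}" by auto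
  have "\<bar>fst (x i) - fst (x j)\<bar> + \<bar>snd (x i) - snd (x j)\<bar> \<le> r"
    "\<bar>fst (x k) - fst (x l)\<bar> + \<bar>snd (x k) - snd (x l)\<bar> \<le> r"
    using bounds h by linarith+
  then have "dist (x i) (x j) \<le> r" "dist (x k) (x l) \<le> r"
    by (meson dist_le_abs_fst_plus_abs_snd order_trans)+
  with plane idx distinct have "\<not> segments_cross (x i) (x j) (x k) (x l)"
    unfolding rgg_plane_def by blast
  then show False using segments_cross_plus_shape[OF h(1) sq] by contradiction
qed

lemma prob_rgg_nonplane_ge:
  fixes h r :: real
  assumes h: "0 < h" "h \<le> 1/3" "3 * h \<le> r"
  shows "1 - 4 * (1 - (h/5)\<^sup>2) ^ n \<le> measure (rgg_space n) {x \<in> space (rgg_space n). \<not> rgg_plane n r x}"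
proof -
  interpret P: prob_space "rgg_space n" by (rule prob_space_rgg_space)
  define centres :: "point set"
    where "centres = set [(1/2 - h, 1/2), (1/2 + h, 1/2), (1/2, 1/2 - h), (1/2, 1/2 + h)]"
  define missed where "missed p = {x \<in> space (rgg_space n). \<forall>i<n. x i \<notin> square_around p (h/10)}" for p
  define q where "q = (1 - (h/5)\<^sup>2) ^ n"
  have missed_sets: "missed p \<in> sets (rgg_space n)" for p
    unfolding missed_def square_around_def by (intro sets_rgg_all_outside) (simp add: borel_closed)
  have missed_prob: "measure (rgg_space n) (missed p) = q" if "p \<in> centres" for p
  proof -
    have "square_around p (h/10) \<subseteq> unit_square"
      using that h by (intro square_around_subset_unit_square) (auto simp: centres_def)
    then show ?thesis
      unfolding missed_def q_def using h
      by (simp add: measure_rgg_all_outside square_around_def borel_closed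
          measure_unif_square_compl_square_around[unfolded square_around_def] power_divide)
  qed
  have "card centres \<le> 4"
    using card_length[of "[(1/2 - h, 1/2), (1/2 + h, 1/2), (1/2, 1/2 - h), (1/2, 1/2 + h :: real)]"]
    unfolding centres_def by simp
  moreover have "q \<ge> 0" unfolding q_def using h by (simp add: power_le_one)
  ultimately have "card centres * q \<le> 4 * q"
    by (intro mult_right_mono) simp_all
  have "measure (rgg_space n) (\<Union>p\<in>centres. missed p) \<le> (\<Sum>p\<in>centres. measure (rgg_space n) (missed p))"
    by (rule measure_UNION_le) (simp_all add: centres_def missed_sets)
  also have "\<dots> = card centres * q"
    using missed_prob by simp
  also have "\<dots> \<le> 4 * q" by fact
  finally have "measure (rgg_space n) (\<Union>p\<in>centres. missed p) \<le> 4 * q" .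
  moreover have "space (rgg_space n) - (\<Union>p\<in>centres. missed p)
      \<subseteq> {x \<in> space (rgg_space n). \<not> rgg_plane n r x}"
  proof safe
    fix x assume "x \<in> space (rgg_space n)" "x \<notin> (\<Union>p\<in>centres. missed p)"
    then obtain i j k l where "i < n" "j < n" "k < n" "l < n"
      "x i \<in> square_around (1/2 - h, 1/2) (h/10)" "x j \<in> square_around (1/2 + h, 1/2) (h/10)"
      "x k \<in> square_around (1/2, 1/2 - h) (h/10)" "x l \<in> square_around (1/2, 1/2 + h) (h/10)"
      unfolding centres_def missed_def by auto
    then show "rgg_plane n r x \<Longrightarrow> False"
      using not_rgg_plane_if_plus_shape[OF h(1,3), where z = "(1/2, 1/2)"] by auto
  qed
  then have "measure (rgg_space n) (space (rgg_space n) - (\<Union>p\<in>centres. missed p))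
      \<le> measure (rgg_space n) {x \<in> space (rgg_space n). \<not> rgg_plane n r x}"
    by (intro P.finite_measure_mono sets_rgg_nonplane)
  moreover have "(\<Union>p\<in>centres. missed p) \<in> sets (rgg_space n)"
    unfolding centres_def using missed_sets by (intro sets.finite_UN) auto
  ultimately show ?thesis
    by (simp add: P.prob_compl q_def)
qed

lemma prob_rgg_nonplane_ge_powr:
  fixes r :: real
  assumes r: "0 < r" "ln (real n) \<le> r\<^sup>2 * real n" and n: "1 \<le> n"
  shows "1 - 4 * real n powr (-1/225) \<le> measure (rgg_space n) {x \<in> space (rgg_space n). \<not> rgg_plane n r x}"
proof -
  define h where "h = min r 1 / 3"
  have h: "0 < h" "h \<le> 1/3" "3 * h \<le> r" unfolding h_def using r by auto
  have "ln (real n) \<le> (min r 1)\<^sup>2 * real n"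
  proof (cases "r \<le> 1")
    case False
    have "ln (real n) \<le> real n - 1" using n by (intro ln_le_minus_one) simp
    with False show ?thesis by simp
  qed (use r in simp)
  then have exponent: "ln (real n) / 225 \<le> (h/5)\<^sup>2 * real n"
    unfolding h_def by (simp add: power_divide)
  have "(1 - (h/5)\<^sup>2) ^ n \<le> exp (- (h/5)\<^sup>2) ^ n"
    using h by (intro power_mono) (auto simp: power_le_one exp_ge_add_one_self[of "- (h/5)\<^sup>2", simplified])
  also have "\<dots> = exp (- ((h/5)\<^sup>2 * real n))"
    by (simp add: exp_of_nat_mult[symmetric] mult.commute)
  also have "\<dots> \<le> exp (- ln (real n) / 225)"
    using exponent by simp
  also have "\<dots> = real n powr (-1/225)"
    using n by (simp add: powr_def)
  finally show ?thesis
    using prob_rgg_nonplane_ge[OF h, of n] by linarith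
qed

theorem theorem3:
  fixes r :: "nat \<Rightarrow> real" and c :: real
  assumes "c \<ge> 36"
    and "eventually (\<lambda>n. r n \<ge> sqrt (c * ln (real n) / real n)) at_top"
  shows "(\<lambda>n. measure (rgg_space n) {x \<in> space (rgg_space n). \<not> rgg_plane n (r n) x})
           \<longlonglongrightarrow> 1"
proof (rule tendsto_sandwich)
  show "(\<lambda>n. 1 - 4 * real n powr (-1/225)) \<longlonglongrightarrow> 1" by real_asymp
  show "eventually (\<lambda>n. 1 - 4 * real n powr (-1/225)
      \<le> measure (rgg_space n) {x \<in> space (rgg_space n). \<not> rgg_plane n (r n) x}) sequentially"
    using assms(2) eventually_ge_at_top[of 2]
  proof eventually_elim
    case (elim n)
    have "0 < c * ln (real n) / real n" using assms(1) elim(2) by simp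
    with elim(1) have "0 < r n" "c * ln (real n) / real n \<le> (r n)\<^sup>2"
      by (auto intro: sqrt_le_D order.strict_trans2[OF real_sqrt_gt_zero])
    have "ln (real n) \<le> c * ln (real n)" using assms(1) elim(2) by simp
    also have "\<dots> \<le> (r n)\<^sup>2 * real n" using \<open>c * ln (real n) / real n \<le> (r n)\<^sup>2\<close> elim(2)
      by (simp add: field_simps)
    finally show ?case
      using \<open>0 < r n\<close> elim(2) by (intro prob_rgg_nonplane_ge_powr) simp_all
  qed
  show "eventually (\<lambda>n. measure (rgg_space n) {x \<in> space (rgg_space n). \<not> rgg_plane n (r n) x} \<le> 1) sequentially"
    by (simp add: prob_space.prob_le_1[OF prob_space_rgg_space])
qed (rule tendsto_const)

end
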